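(* (i) For every $r\in\mathbb N$ and non-negative integers $n_1,\dots,n_r,m_1,\dots,m_r$, with $n=\sum_jn_j$, $m=\sum_jm_j$, $$\lim_{N\to\infty}\Big(\Big\langle\prod_{j=1}^r(E^N_-)^{n_j}(E^N_+)^{m_j}\Big\rangle^N_\beta-\big\langle(E^N_-)^n(E^N_+)^m\big\rangle^N_\beta\Big)=0,$$ so the limits of the two expectations coincide. (ii) If $X^N$ are operators on $\mathbb C^{2^N}\otimes\mathbb C^{2^N}$ with $\lim_{N\to\infty}\langle (X^N)^\dagger X^N\rangle^N_\beta=\lim_{N\to\infty}\|X^N|\Omega^N_\beta\rangle\|^2=0$, then for all non-negative integers $n,m$, $\lim_{N\to\infty}\langle(E^N_-)^n(E^N_+)^mX^N\rangle^N_\beta=0$.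
   Context: Fix real $\epsilon$, $T_c>0$, $\beta>0$. For $N\in\mathbb N$, on $(\mathbb C^2)^{\otimes N}$ let $S^N_i=\frac12\sum_{k=1}^N\sigma^{(k)}_i$ ($\sigma^{(k)}_i$ Pauli matrices at site $k$), $S^N_\pm=S^N_x\pm iS^N_y$, $H^N=-2\epsilon S^N_z-\frac{2T_c}{N}S^N_+S^N_-$, $\rho^N_\beta=e^{-\beta H^N}/\mathrm{Tr}\,e^{-\beta H^N}=\sum_ar_a|e_a\rangle\langle e_a|$ for an orthonormal eigenbasis $\{|e_a\rangle\}$ of $H^N$ of joint eigenvectors of $(\vec S^N)^2,S^N_z$. Let $|\Omega^N_\beta\rangle=\sum_a\sqrt{r_a}|e_a\rangle\otimes|e_a\rangle$ and $\langle X\rangle^N_\beta=\langle\Omega^N_\beta|X|\Omega^N_\beta\rangle$. Let $\mathfrak c=\lim_N(N^{-2}\mathrm{Tr}[\rho^N_\beta S^N_+S^N_-])^{1/2}$, assumed $>0$, and $E^N_\pm=\frac1{\mathfrak cN}S^N_\pm\otimes\mathbb I$. *)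

theory Defs
  imports Complex_Main "Jordan_Normal_Form.Matrix" "Jordan_Normal_Form.Schur_Decomposition"
begin

definition kron :: "complex mat \<Rightarrow> complex mat \<Rightarrow> complex mat" where
  "kron A B = mat (dim_row A * dim_row B) (dim_col A * dim_col B)
     (\<lambda>(i,j). A $$ (i div dim_row B, j div dim_col B) * B $$ (i mod dim_row B, j mod dim_col B))"

definition vkron :: "complex vec \<Rightarrow> complex vec \<Rightarrow> complex vec" where
  "vkron v w = vec (dim_vec v * dim_vec w) (\<lambda>i. v $ (i div dim_vec w) * w $ (i mod dim_vec w))"

definition pauli_x :: "complex mat" where
  "pauli_x = mat_of_rows_list 2 [[0, 1], [1, 0]]"
definition pauli_y :: "complex mat" where
  "pauli_y = mat_of_rows_list 2 [[0, -\<i>], [\<i>, 0]]"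
definition pauli_z :: "complex mat" where
  "pauli_z = mat_of_rows_list 2 [[1, 0], [0, -1]]"

definition site_op :: "nat \<Rightarrow> nat \<Rightarrow> complex mat \<Rightarrow> complex mat" where
  "site_op N k A = kron (kron (1\<^sub>m (2^k)) A) (1\<^sub>m (2^(N - k - 1)))"

definition spin_op :: "nat \<Rightarrow> complex mat \<Rightarrow> complex mat" where
  "spin_op N A = mat (2^N) (2^N) (\<lambda>(i,j). (1/2) * (\<Sum>k<N. site_op N k A $$ (i,j)))"

definition Sx :: "nat \<Rightarrow> complex mat" where "Sx N = spin_op N pauli_x"
definition Sy :: "nat \<Rightarrow> complex mat" where "Sy N = spin_op N pauli_y"
definition Sz :: "nat \<Rightarrow> complex mat" where "Sz N = spin_op N pauli_z"
definition Splus :: "nat \<Rightarrow> complex mat" where "Splus N = Sx N + \<i> \<cdot>\<^sub>m Sy N"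
definition Sminus :: "nat \<Rightarrow> complex mat" where "Sminus N = Sx N - \<i> \<cdot>\<^sub>m Sy N"
definition Ssq :: "nat \<Rightarrow> complex mat" where
  "Ssq N = Sx N * Sx N + Sy N * Sy N + Sz N * Sz N"

definition ham :: "real \<Rightarrow> real \<Rightarrow> nat \<Rightarrow> complex mat" where
  "ham eps Tc N = (- complex_of_real (2 * eps)) \<cdot>\<^sub>m Sz N
      + (- complex_of_real (2 * Tc / real N)) \<cdot>\<^sub>m (Splus N * Sminus N)"

text \<open>Given an orthonormal eigenbasis e a (a < 2^N) of H^N with eigenvalues lam a,
  the Gibbs weights r_a = exp(-beta lam_a) / sum_b exp(-beta lam_b), i.e. the eigenvalues of
  e^{-beta H}/Tr e^{-beta H} on e_a.\<close>
definition gibbs_weight :: "real \<Rightarrow> nat \<Rightarrow> (nat \<Rightarrow> real) \<Rightarrow> nat \<Rightarrow> real" where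
  "gibbs_weight \<beta> N lam a = exp (- \<beta> * lam a) / (\<Sum>b<2^N. exp (- \<beta> * lam b))"

definition ket_bra :: "complex vec \<Rightarrow> complex mat" where
  "ket_bra v = mat (dim_vec v) (dim_vec v) (\<lambda>(i,j). v $ i * cnj (v $ j))"

definition gibbs_state :: "real \<Rightarrow> nat \<Rightarrow> (nat \<Rightarrow> real) \<Rightarrow> (nat \<Rightarrow> complex vec) \<Rightarrow> complex mat" where
  "gibbs_state \<beta> N lam e = mat (2^N) (2^N)
     (\<lambda>(i,j). \<Sum>a<2^N. complex_of_real (gibbs_weight \<beta> N lam a) * ket_bra (e a) $$ (i,j))"

definition purif :: "real \<Rightarrow> nat \<Rightarrow> (nat \<Rightarrow> real) \<Rightarrow> (nat \<Rightarrow> complex vec) \<Rightarrow> complex vec" where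
  "purif \<beta> N lam e = vec (4^N)
     (\<lambda>i. \<Sum>a<2^N. complex_of_real (sqrt (gibbs_weight \<beta> N lam a)) * vkron (e a) (e a) $ i)"

definition expect :: "complex vec \<Rightarrow> complex mat \<Rightarrow> complex" where
  "expect \<Omega> X = (X *\<^sub>v \<Omega>) \<bullet>c \<Omega>"

definition mtrace :: "complex mat \<Rightarrow> complex" where
  "mtrace A = (\<Sum>i<dim_row A. A $$ (i,i))"

definition Eplus :: "real \<Rightarrow> nat \<Rightarrow> complex mat" where
  "Eplus c N = complex_of_real (1 / (c * real N)) \<cdot>\<^sub>m kron (Splus N) (1\<^sub>m (2^N))"
definition Eminus :: "real \<Rightarrow> nat \<Rightarrow> complex mat" where
  "Eminus c N = complex_of_real (1 / (c * real N)) \<cdot>\<^sub>m kron (Sminus N) (1\<^sub>m (2^N))"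

text \<open>Ordered product prod_{j=1}^r (E_-)^{n_j} (E_+)^{m_j}, with the list [(n_1,m_1),...,(n_r,m_r)].\<close>
definition word_op :: "real \<Rightarrow> nat \<Rightarrow> (nat \<times> nat) list \<Rightarrow> complex mat" where
  "word_op c N ps = foldr (\<lambda>(n,m) M. (Eminus c N ^\<^sub>m n) * (Eplus c N ^\<^sub>m m) * M) ps (1\<^sub>m (4^N))"

end

theory Submission
  imports Defs "HOL-Analysis.L2_Norm"
begin

text \<open>The estimates hold in every unit vector state: of the hypotheses only \<open>c > 0\<close> and the
  orthonormality of the eigenbasis (which makes the purification a unit vector) are used.
  \<open>S\<^sub>\<plusminus> \<otimes> I\<close> is a sum of \<open>N\<close> single-site operators of norm at most one, so \<open>E\<^sub>\<plusminus>\<close> have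
  norm at most \<open>1/c\<close>; operators at different sites commute, so \<open>[E\<^sub>+, E\<^sub>-]\<close> is a sum of only
  \<open>N\<close> on-site commutators scaled by \<open>1/(c N)\<^sup>2\<close> and has norm \<open>O(1/N)\<close>. Moving every \<open>E\<^sub>-\<close> of
  a word to the left costs one such commutator per exchange, so the word differs in norm from
  its normally ordered form by \<open>O(1/N)\<close>, which gives (i). For (ii), Cauchy--Schwarz bounds
  \<open>|\<langle>\<Omega>, E\<^sub>-\<^sup>n E\<^sub>+\<^sup>m X \<Omega>\<rangle>|\<close> by a constant times \<open>\<parallel>X \<Omega>\<parallel>\<close>, and \<open>\<parallel>X \<Omega>\<parallel>\<^sup>2 = \<langle>X\<^sup>\<dagger> X\<rangle> \<rightarrow> 0\<close>.\<close>

lemma sum_lessThan_mult: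
  "(\<Sum>t<n * m. f t) = (\<Sum>u<n. \<Sum>v<m. f (u * m + v))" for f :: "nat \<Rightarrow> 'a::comm_monoid_add"
proof -
  have "(\<Sum>t\<in>{u * m..<u * m + m}. f t) = (\<Sum>v<m. f (u * m + v))" for u
    using sum.shift_bounds_nat_ivl[of f 0 "u * m" m] by (simp add: atLeast0LessThan add.commute)
  then show ?thesis by (simp flip: sum.nat_group)
qed

lemma div_mod_less_mult:
  fixes i a b :: nat
  assumes "i < a * b"
  shows "i div b < a" "i mod b < b"
proof -
  show "i div b < a" using assms by (rule less_mult_imp_div_less)
  from assms have "b > 0" by (cases b) auto
  then show "i mod b < b" by simp
qed

lemma dim_kron [simp]:
  "dim_row (kron A B) = dim_row A * dim_row B" "dim_col (kron A B) = dim_col A * dim_col B"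
  unfolding kron_def by simp_all

lemma index_kron [simp]:
  "i < dim_row A * dim_row B \<Longrightarrow> j < dim_col A * dim_col B \<Longrightarrow>
   kron A B $$ (i,j) = A $$ (i div dim_row B, j div dim_col B) * B $$ (i mod dim_row B, j mod dim_col B)"
  unfolding kron_def by simp

lemma kron_carrier_mat:
  "A \<in> carrier_mat a b \<Longrightarrow> B \<in> carrier_mat c d \<Longrightarrow> kron A B \<in> carrier_mat (a * c) (b * d)"
  by auto

lemma kron_mult:
  assumes "dim_col A = dim_row C" "dim_col B = dim_row D"
  shows "kron A B * kron C D = kron (A * C) (B * D)"
proof (rule eq_matI)
  fix i j assume "i < dim_row (kron (A * C) (B * D))" "j < dim_col (kron (A * C) (B * D))"
  then have i: "i < dim_row A * dim_row B" and j: "j < dim_col C * dim_col D" by auto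
  note ij = div_mod_less_mult[OF i] div_mod_less_mult[OF j]
  have "(kron A B * kron C D) $$ (i,j) = (\<Sum>t<dim_col A * dim_col B.
      (A $$ (i div dim_row B, t div dim_col B) * B $$ (i mod dim_row B, t mod dim_col B)) *
      (C $$ (t div dim_col B, j div dim_col D) * D $$ (t mod dim_col B, j mod dim_col D)))"
    using i j assms by (auto simp: scalar_prod_def lessThan_atLeast0 div_mod_less_mult intro!: sum.cong)
  also have "\<dots> = (\<Sum>u<dim_col A. \<Sum>v<dim_col B.
      (A $$ (i div dim_row B, u) * B $$ (i mod dim_row B, v)) *
      (C $$ (u, j div dim_col D) * D $$ (v, j mod dim_col D)))"
    unfolding sum_lessThan_mult by (intro sum.cong refl) simp
  also have "\<dots> = (\<Sum>u<dim_col A. A $$ (i div dim_row B, u) * C $$ (u, j div dim_col D)) *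
      (\<Sum>v<dim_col B. B $$ (i mod dim_row B, v) * D $$ (v, j mod dim_col D))"
    by (simp add: sum_product algebra_simps)
  also have "\<dots> = kron (A * C) (B * D) $$ (i,j)"
    using i j ij assms by (simp add: scalar_prod_def lessThan_atLeast0)
  finally show "(kron A B * kron C D) $$ (i,j) = kron (A * C) (B * D) $$ (i,j)" .
qed auto

lemma kron_assoc: "kron (kron A B) C = kron A (kron B C)"
proof (rule eq_matI)
  fix i j assume "i < dim_row (kron A (kron B C))" "j < dim_col (kron A (kron B C))"
  then have i: "i < dim_row A * (dim_row B * dim_row C)" and j: "j < dim_col A * (dim_col B * dim_col C)"
    by auto
  have mod_div: "k mod (b * c) div c = k div c mod b" "k mod (b * c) mod c = k mod c" for k b c :: nat
  proof -
    have "k mod (c * b) = c * (k div c mod b) + k mod c" by (rule mod_mult2_eq)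
    then show "k mod (b * c) div c = k div c mod b" by (cases "c = 0") (simp_all add: mult.commute)
    show "k mod (b * c) mod c = k mod c" by (simp add: mult.commute mod_mod_cancel)
  qed
  have div_div: "k div (b * c) = k div c div b" for k b c :: nat
    by (simp add: div_mult2_eq mult.commute[of b c])
  have i': "i < dim_row A * dim_row B * dim_row C" and j': "j < dim_col A * dim_col B * dim_col C"
    using i j by (simp_all add: mult.assoc)
  have "kron (kron A B) C $$ (i,j)
      = A $$ (i div dim_row C div dim_row B, j div dim_col C div dim_col B)
        * B $$ (i div dim_row C mod dim_row B, j div dim_col C mod dim_col B)
        * C $$ (i mod dim_row C, j mod dim_col C)"
    using index_kron[of i "kron A B" C j] index_kron[of "i div dim_row C" A B "j div dim_col C"] i' j'
      div_mod_less_mult[OF i'] div_mod_less_mult[OF j'] by simp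
  moreover have "kron A (kron B C) $$ (i,j)
      = A $$ (i div (dim_row B * dim_row C), j div (dim_col B * dim_col C))
        * (B $$ (i mod (dim_row B * dim_row C) div dim_row C, j mod (dim_col B * dim_col C) div dim_col C)
        * C $$ (i mod (dim_row B * dim_row C) mod dim_row C, j mod (dim_col B * dim_col C) mod dim_col C))"
    using index_kron[of i A "kron B C" j]
      index_kron[of "i mod (dim_row B * dim_row C)" B C "j mod (dim_col B * dim_col C)"] i j
      div_mod_less_mult[OF i] div_mod_less_mult[OF j] by simp
  ultimately show "kron (kron A B) C $$ (i,j) = kron A (kron B C) $$ (i,j)"
    by (simp add: mod_div div_div)
qed (auto simp: ac_simps)

lemma kron_one: "kron (1\<^sub>m a) (1\<^sub>m b) = (1\<^sub>m (a * b) :: complex mat)"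
proof (rule eq_matI)
  fix i j assume "i < dim_row (1\<^sub>m (a * b) :: complex mat)" "j < dim_col (1\<^sub>m (a * b) :: complex mat)"
  then have i: "i < a * b" and j: "j < a * b" by auto
  have "(i div b = j div b \<and> i mod b = j mod b) \<longleftrightarrow> i = j"
    by (metis div_mult_mod_eq)
  then show "kron (1\<^sub>m a) (1\<^sub>m b) $$ (i,j) = (1\<^sub>m (a * b) :: complex mat) $$ (i,j)"
    using i j div_mod_less_mult[OF i] div_mod_less_mult[OF j] by auto
qed auto

lemma dim_mat_adjoint [simp]:
  "dim_row (mat_adjoint A) = dim_col A" "dim_col (mat_adjoint A) = dim_row A"
  unfolding mat_adjoint_def by auto

lemma index_mat_adjoint [simp]:
  "i < dim_col A \<Longrightarrow> j < dim_row A \<Longrightarrow> mat_adjoint A $$ (i,j) = cnj (A $$ (j,i))"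
  unfolding mat_adjoint_def by (simp add: mat_of_rows_index)

lemma mat_adjoint_one: "mat_adjoint (1\<^sub>m n) = (1\<^sub>m n :: complex mat)"
  by (rule eq_matI) auto

lemma kron_mat_adjoint: "mat_adjoint (kron A B) = kron (mat_adjoint A) (mat_adjoint B)"
  by (rule eq_matI) (auto simp: div_mod_less_mult)

lemma kron_unitary:
  assumes "A \<in> carrier_mat a a" "B \<in> carrier_mat b b"
    and "mat_adjoint A * A = 1\<^sub>m a" "mat_adjoint B * B = 1\<^sub>m b"
  shows "mat_adjoint (kron A B) * kron A B = 1\<^sub>m (a * b)"
  using assms by (simp add: kron_mat_adjoint kron_mult kron_one)

lemma kron_add_left:
  "A \<in> carrier_mat n m \<Longrightarrow> B \<in> carrier_mat n m \<Longrightarrow> kron (A + B) C = kron A C + kron B C"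
  by (rule eq_matI) (auto simp: div_mod_less_mult algebra_simps)

lemma kron_diff_left:
  "A \<in> carrier_mat n m \<Longrightarrow> B \<in> carrier_mat n m \<Longrightarrow> kron (A - B) C = kron A C - kron B C"
  by (rule eq_matI) (auto simp: div_mod_less_mult algebra_simps)

lemma kron_smult_left: "kron (a \<cdot>\<^sub>m A) C = a \<cdot>\<^sub>m kron A C"
  by (rule eq_matI) (auto simp: div_mod_less_mult)

subsection \<open>Euclidean norm and operator bounds\<close>

definition vnorm :: "complex vec \<Rightarrow> real" where
  "vnorm v = L2_set (\<lambda>i. cmod (v $ i)) {..<dim_vec v}"

lemma vnorm_nonneg [simp]: "0 \<le> vnorm v"
  unfolding vnorm_def by simp

lemma cinner_self_vnorm: "v \<bullet>c v = complex_of_real (vnorm v ^ 2)"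
proof -
  have "v \<bullet>c v = (\<Sum>i<dim_vec v. complex_of_real (cmod (v $ i) ^ 2))"
    by (simp add: scalar_prod_def lessThan_atLeast0 complex_mult_cnj cmod_power2)
  then show ?thesis
    unfolding vnorm_def L2_set_def by (simp add: sum_nonneg)
qed

lemma vnorm_add_le:
  assumes "dim_vec w = dim_vec v"
  shows "vnorm (v + w) \<le> vnorm v + vnorm w"
proof -
  have "vnorm (v + w) = L2_set (\<lambda>i. cmod (v $ i + w $ i)) {..<dim_vec v}"
    unfolding vnorm_def using assms by (intro L2_set_cong) auto
  also have "\<dots> \<le> L2_set (\<lambda>i. cmod (v $ i) + cmod (w $ i)) {..<dim_vec v}"
    by (rule L2_set_mono) (auto simp: norm_triangle_ineq)
  also have "\<dots> \<le> vnorm v + vnorm w"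
    using L2_set_triangle_ineq[of "\<lambda>i. cmod (v $ i)" "\<lambda>i. cmod (w $ i)"] assms
    unfolding vnorm_def by simp
  finally show ?thesis .
qed

lemma vnorm_smult: "vnorm (a \<cdot>\<^sub>v v) = cmod a * vnorm v"
  unfolding vnorm_def by (subst L2_set_right_distrib) (auto intro!: L2_set_cong simp: norm_mult)

lemma vnorm_diff_le:
  assumes "dim_vec w = dim_vec v"
  shows "vnorm (v - w) \<le> vnorm v + vnorm w"
proof -
  have "v - w = v + (-1) \<cdot>\<^sub>v w" using assms by auto
  then show ?thesis using vnorm_add_le[of "(-1) \<cdot>\<^sub>v w" v] assms by (simp add: vnorm_smult)
qed

lemma vnorm_zero [simp]: "vnorm (0\<^sub>v n) = 0"
  unfolding vnorm_def by (simp add: L2_set_0')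

lemma cmod_cinner_le:
  assumes "dim_vec w = dim_vec v"
  shows "cmod (v \<bullet>c w) \<le> vnorm v * vnorm w"
proof -
  have "cmod (v \<bullet>c w) \<le> (\<Sum>i<dim_vec v. \<bar>cmod (v $ i)\<bar> * \<bar>cmod (w $ i)\<bar>)"
    using assms by (auto simp: scalar_prod_def lessThan_atLeast0 norm_mult intro!: order_trans[OF norm_sum])
  also have "\<dots> \<le> vnorm v * vnorm w"
    unfolding vnorm_def using assms L2_set_mult_ineq by metis
  finally show ?thesis .
qed

lemma mat_adjoint_cinner:
  fixes M :: "complex mat"
  assumes M: "M \<in> carrier_mat n m" and x: "x \<in> carrier_vec n" and w: "w \<in> carrier_vec m"
  shows "(mat_adjoint M *\<^sub>v x) \<bullet>c w = x \<bullet>c (M *\<^sub>v w)"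
proof -
  have "(mat_adjoint M *\<^sub>v x) \<bullet>c w = (\<Sum>j<m. \<Sum>i<n. x $ i * (cnj (M $$ (i,j)) * cnj (w $ j)))"
    using M x w
    by (auto simp: scalar_prod_def lessThan_atLeast0 sum_distrib_left sum_distrib_right mult_ac intro!: sum.cong)
  also have "\<dots> = (\<Sum>i<n. \<Sum>j<m. x $ i * (cnj (M $$ (i,j)) * cnj (w $ j)))"
    by (rule sum.swap)
  also have "\<dots> = x \<bullet>c (M *\<^sub>v w)"
    using M x w by (auto simp: scalar_prod_def lessThan_atLeast0 sum_distrib_left intro!: sum.cong)
  finally show ?thesis .
qed

definition op_norm_le :: "nat \<Rightarrow> complex mat \<Rightarrow> real \<Rightarrow> bool" where
  "op_norm_le d M K \<longleftrightarrow>
     M \<in> carrier_mat d d \<and> 0 \<le> K \<and> (\<forall>v \<in> carrier_vec d. vnorm (M *\<^sub>v v) \<le> K * vnorm v)"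

lemma op_norm_leI:
  assumes "M \<in> carrier_mat d d" "0 \<le> K" "\<And>v. v \<in> carrier_vec d \<Longrightarrow> vnorm (M *\<^sub>v v) \<le> K * vnorm v"
  shows "op_norm_le d M K"
  using assms unfolding op_norm_le_def by blast

lemma op_norm_leD:
  assumes "op_norm_le d M K"
  shows "M \<in> carrier_mat d d" "0 \<le> K" "v \<in> carrier_vec d \<Longrightarrow> vnorm (M *\<^sub>v v) \<le> K * vnorm v"
  using assms unfolding op_norm_le_def by auto

lemma op_norm_le_mono:
  assumes M: "op_norm_le d M K" and "K \<le> L"
  shows "op_norm_le d M L"
proof (rule op_norm_leI)
  fix v :: "complex vec" assume "v \<in> carrier_vec d"
  then show "vnorm (M *\<^sub>v v) \<le> L * vnorm v"
    using op_norm_leD(3)[OF M] \<open>K \<le> L\<close> mult_right_mono[of K L "vnorm v"] by force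
qed (use op_norm_leD[OF M] \<open>K \<le> L\<close> in auto)

lemma op_norm_le_zero: "op_norm_le d (0\<^sub>m d d) 0"
proof (rule op_norm_leI)
  fix v :: "complex vec" assume "v \<in> carrier_vec d"
  then have "0\<^sub>m d d *\<^sub>v v = 0\<^sub>v d" by (intro eq_vecI) (auto simp: scalar_prod_def)
  then show "vnorm (0\<^sub>m d d *\<^sub>v v) \<le> 0 * vnorm v" by simp
qed auto

lemma op_norm_le_diff_self: "X \<in> carrier_mat d d \<Longrightarrow> op_norm_le d (X - X) 0"
  using op_norm_le_zero by simp

lemma op_norm_le_unitary:
  assumes M: "M \<in> carrier_mat d d" and U: "mat_adjoint M * M = 1\<^sub>m d"
  shows "op_norm_le d M 1"
proof (rule op_norm_leI)
  fix v :: "complex vec" assume v: "v \<in> carrier_vec d"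
  have "(M *\<^sub>v v) \<bullet>c (M *\<^sub>v v) = (mat_adjoint M *\<^sub>v (M *\<^sub>v v)) \<bullet>c v"
    using M v by (simp add: mat_adjoint_cinner)
  also have "mat_adjoint M *\<^sub>v (M *\<^sub>v v) = (mat_adjoint M * M) *\<^sub>v v"
    using M v by (subst assoc_mult_mat_vec[of _ d d _ d]) (auto intro!: carrier_matI)
  also have "\<dots> = v"
    using U v by simp
  finally have "vnorm (M *\<^sub>v v) ^ 2 = vnorm v ^ 2"
    unfolding cinner_self_vnorm of_real_eq_iff .
  then show "vnorm (M *\<^sub>v v) \<le> 1 * vnorm v"
    by (simp add: power2_eq_iff_nonneg)
qed (use M in auto)

lemma op_norm_le_mult:
  assumes A: "op_norm_le d A K" and B: "op_norm_le d B L"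
  shows "op_norm_le d (A * B) (K * L)"
proof (rule op_norm_leI)
  note Ac = op_norm_leD(1)[OF A] and Bc = op_norm_leD(1)[OF B]
  fix v :: "complex vec" assume v: "v \<in> carrier_vec d"
  have "vnorm ((A * B) *\<^sub>v v) = vnorm (A *\<^sub>v (B *\<^sub>v v))"
    using Ac Bc v by (simp add: assoc_mult_mat_vec)
  also have "\<dots> \<le> K * vnorm (B *\<^sub>v v)"
    using Bc v by (intro op_norm_leD(3)[OF A]) auto
  also have "\<dots> \<le> K * (L * vnorm v)"
    by (intro mult_left_mono op_norm_leD(3)[OF B v] op_norm_leD(2)[OF A])
  finally show "vnorm ((A * B) *\<^sub>v v) \<le> K * L * vnorm v" by (simp add: mult.assoc)
qed (use op_norm_leD[OF A] op_norm_leD[OF B] in auto)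

lemma op_norm_le_add:
  assumes A: "op_norm_le d A K" and B: "op_norm_le d B L"
  shows "op_norm_le d (A + B) (K + L)"
proof (rule op_norm_leI)
  note Ac = op_norm_leD(1)[OF A] and Bc = op_norm_leD(1)[OF B]
  fix v :: "complex vec" assume v: "v \<in> carrier_vec d"
  have "vnorm ((A + B) *\<^sub>v v) \<le> vnorm (A *\<^sub>v v) + vnorm (B *\<^sub>v v)"
    using Ac Bc v by (auto simp: add_mult_distrib_mat_vec intro: vnorm_add_le)
  also have "\<dots> \<le> K * vnorm v + L * vnorm v"
    using op_norm_leD(3)[OF A v] op_norm_leD(3)[OF B v] by (rule add_mono)
  finally show "vnorm ((A + B) *\<^sub>v v) \<le> (K + L) * vnorm v" by (simp add: algebra_simps)
qed (use op_norm_leD[OF A] op_norm_leD[OF B] in auto)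

lemma op_norm_le_diff:
  assumes A: "op_norm_le d A K" and B: "op_norm_le d B L"
  shows "op_norm_le d (A - B) (K + L)"
proof (rule op_norm_leI)
  note Ac = op_norm_leD(1)[OF A] and Bc = op_norm_leD(1)[OF B]
  fix v :: "complex vec" assume v: "v \<in> carrier_vec d"
  have "vnorm ((A - B) *\<^sub>v v) \<le> vnorm (A *\<^sub>v v) + vnorm (B *\<^sub>v v)"
    using Ac Bc v by (auto simp: minus_mult_distrib_mat_vec intro: vnorm_diff_le)
  also have "\<dots> \<le> K * vnorm v + L * vnorm v"
    using op_norm_leD(3)[OF A v] op_norm_leD(3)[OF B v] by (rule add_mono)
  finally show "vnorm ((A - B) *\<^sub>v v) \<le> (K + L) * vnorm v" by (simp add: algebra_simps)
qed (use op_norm_leD[OF A] op_norm_leD[OF B] in auto)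

lemma op_norm_le_smult:
  assumes A: "op_norm_le d A K"
  shows "op_norm_le d (a \<cdot>\<^sub>m A) (cmod a * K)"
proof (rule op_norm_leI)
  note Ac = op_norm_leD(1)[OF A]
  fix v :: "complex vec" assume v: "v \<in> carrier_vec d"
  have "(a \<cdot>\<^sub>m A) *\<^sub>v v = a \<cdot>\<^sub>v (A *\<^sub>v v)"
    using Ac v by (intro eq_vecI) (auto simp: scalar_prod_def sum_distrib_left mult.assoc)
  then have "vnorm ((a \<cdot>\<^sub>m A) *\<^sub>v v) = cmod a * vnorm (A *\<^sub>v v)" by (simp add: vnorm_smult)
  also have "\<dots> \<le> cmod a * (K * vnorm v)"
    using op_norm_leD(3)[OF A v] by (simp add: mult_left_mono)
  finally show "vnorm ((a \<cdot>\<^sub>m A) *\<^sub>v v) \<le> cmod a * K * vnorm v" by (simp add: mult.assoc)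
qed (use op_norm_leD[OF A] in auto)

lemma op_norm_le_pow:
  assumes A: "op_norm_le d A K"
  shows "op_norm_le d (A ^\<^sub>m n) (K ^ n)"
proof (induction n)
  case 0
  show ?case using op_norm_leD(1)[OF A] by (simp add: op_norm_le_unitary mat_adjoint_one)
next
  case (Suc n)
  then show ?case using op_norm_le_mult[OF Suc A] by (simp add: mult.commute)
qed

subsection \<open>Reordering almost commuting operators\<close>

abbreviation commutator :: "complex mat \<Rightarrow> complex mat \<Rightarrow> complex mat" where
  "commutator A B \<equiv> A * B - B * A"

lemma diff_telescope_mat:
  "X \<in> carrier_mat n m \<Longrightarrow> Y \<in> carrier_mat n m \<Longrightarrow> Z \<in> carrier_mat n m \<Longrightarrow>
   X - Z = (X - Y) + (Y - (Z :: complex mat))"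
  by (rule eq_matI) auto

lemma commutator_mult_right:
  assumes X: "X \<in> carrier_mat d d" and Y: "Y \<in> carrier_mat d d" and Z: "Z \<in> carrier_mat d d"
  shows "commutator X (Y * Z) = commutator X Y * Z + Y * commutator X Z"
proof -
  have "commutator X Y * Z + Y * commutator X Z
      = (X * (Y * Z) - Y * (X * Z)) + (Y * (X * Z) - (Y * Z) * X)"
    using X Y Z by (simp add: minus_mult_distrib_mat[of _ d d _ _ d] mult_minus_distrib_mat[of _ d d _ d]
        assoc_mult_mat[of _ d d _ d _ d] mult_carrier_mat)
  also have "\<dots> = commutator X (Y * Z)"
    using X Y Z by (intro diff_telescope_mat[symmetric, of _ d d]) auto
  finally show ?thesis ..
qed

lemma commutator_mult_left:
  assumes X: "X \<in> carrier_mat d d" and Y: "Y \<in> carrier_mat d d" and Z: "Z \<in> carrier_mat d d"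
  shows "commutator (Y * X) Z = Y * commutator X Z + commutator Y Z * X"
proof -
  have "Y * commutator X Z + commutator Y Z * X
      = (Y * (X * Z) - Y * (Z * X)) + (Y * (Z * X) - Z * (Y * X))"
    using X Y Z by (simp add: minus_mult_distrib_mat[of _ d d _ _ d] mult_minus_distrib_mat[of _ d d _ d]
        assoc_mult_mat[of _ d d _ d _ d] mult_carrier_mat)
  also have "\<dots> = Y * (X * Z) - Z * (Y * X)"
    using X Y Z by (intro diff_telescope_mat[symmetric, of _ d d]) auto
  finally show ?thesis using X Y Z by (simp add: assoc_mult_mat[of _ d d _ d _ d] mult_carrier_mat)
qed

lemma reorder_step_identity:
  assumes P: "P \<in> carrier_mat d d" and Q: "Q \<in> carrier_mat d d" and R: "R \<in> carrier_mat d d"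
    and S: "S \<in> carrier_mat d d" and W: "W \<in> carrier_mat d d"
  shows "P * Q * W - (P * R) * (Q * S) = (P * Q) * (W - R * S) + P * commutator Q R * S"
proof -
  have "(P * Q) * (W - R * S) + P * commutator Q R * S
      = (P * (Q * W) - P * (Q * (R * S))) + (P * (Q * (R * S)) - P * (R * (Q * S)))"
    using P Q R S W by (simp add: minus_mult_distrib_mat[of _ d d _ _ d] mult_minus_distrib_mat[of _ d d _ d]
        assoc_mult_mat[of _ d d _ d _ d] mult_carrier_mat)
  also have "\<dots> = P * (Q * W) - P * (R * (Q * S))"
    using P Q R S W by (intro diff_telescope_mat[symmetric, of _ d d]) auto
  finally show ?thesis using P Q R S W by (simp add: assoc_mult_mat[of _ d d _ d _ d] mult_carrier_mat)
qed

lemma pow_mat_add: "A \<in> carrier_mat d d \<Longrightarrow> A ^\<^sub>m (m + n) = A ^\<^sub>m m * A ^\<^sub>m n"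
  by (induction n) (simp_all add: assoc_mult_mat[of _ d d _ d _ d])

definition word_mat :: "complex mat \<Rightarrow> complex mat \<Rightarrow> nat \<Rightarrow> (nat \<times> nat) list \<Rightarrow> complex mat" where
  "word_mat A B d ps = foldr (\<lambda>(n, m) M. A ^\<^sub>m n * B ^\<^sub>m m * M) ps (1\<^sub>m d)"

text \<open>The second summand bounds the cost of moving the \<open>B\<^sup>m\<close> of the first factor past all
  \<open>A\<close>'s of the remaining word.\<close>

fun reorder_bound :: "real \<Rightarrow> (nat \<times> nat) list \<Rightarrow> real" where
  "reorder_bound K [] = 0"
| "reorder_bound K ((n, m) # ps) = K ^ (n + m) * reorder_bound K ps
     + real m * real (sum_list (map fst ps))
       * K ^ (n + (m + sum_list (map fst ps)) + sum_list (map snd ps))"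

lemma word_op_eq: "word_op c N ps = word_mat (Eminus c N) (Eplus c N) (4^N) ps"
  unfolding word_op_def word_mat_def ..

locale almost_commuting =
  fixes d :: nat and A B :: "complex mat" and K \<delta> :: real
  assumes A: "op_norm_le d A K" and B: "op_norm_le d B K" and K_ge_1: "1 \<le> K"
    and commutator_BA: "op_norm_le d (commutator B A) \<delta>"
begin

lemma A_carrier: "A \<in> carrier_mat d d" and B_carrier: "B \<in> carrier_mat d d"
  and \<delta>_nonneg: "0 \<le> \<delta>"
  using A B commutator_BA op_norm_leD by auto

lemma dim_A [simp]: "dim_row A = d" and dim_B [simp]: "dim_row B = d"
  using A_carrier B_carrier by auto

lemma commutator_pow_right: "op_norm_le d (commutator B (A ^\<^sub>m n)) (real n * K ^ n * \<delta>)"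
proof (induction n)
  case 0
  show ?case using B_carrier by (simp add: op_norm_le_zero)
next
  case (Suc n)
  have "commutator B (A ^\<^sub>m Suc n) = commutator B (A ^\<^sub>m n) * A + A ^\<^sub>m n * commutator B A"
    using commutator_mult_right[OF B_carrier pow_carrier_mat[OF A_carrier] A_carrier] by simp
  moreover have "op_norm_le d (commutator B (A ^\<^sub>m n) * A + A ^\<^sub>m n * commutator B A)
      (real n * K ^ n * \<delta> * K + K ^ n * \<delta>)"
    by (rule op_norm_le_add[OF op_norm_le_mult[OF Suc A]
          op_norm_le_mult[OF op_norm_le_pow[OF A] commutator_BA]])
  moreover have "K ^ n * \<delta> \<le> K ^ Suc n * \<delta>"
    using K_ge_1 \<delta>_nonneg by (intro mult_right_mono power_increasing) auto
  ultimately show ?case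
    by (auto simp: algebra_simps elim!: op_norm_le_mono)
qed

lemma commutator_pows:
  "op_norm_le d (commutator (B ^\<^sub>m m) (A ^\<^sub>m n)) (real m * real n * K ^ (m + n) * \<delta>)"
proof (induction m)
  case 0
  show ?case
    using op_norm_le_diff_self[OF pow_carrier_mat[OF A_carrier]]
    by (simp add: right_mult_one_mat[OF pow_carrier_mat[OF A_carrier]])
next
  case (Suc m)
  have "commutator (B ^\<^sub>m Suc m) (A ^\<^sub>m n)
      = B ^\<^sub>m m * commutator B (A ^\<^sub>m n) + commutator (B ^\<^sub>m m) (A ^\<^sub>m n) * B"
    using commutator_mult_left[OF B_carrier pow_carrier_mat[OF B_carrier] pow_carrier_mat[OF A_carrier]]
    by simp
  moreover have "op_norm_le d (B ^\<^sub>m m * commutator B (A ^\<^sub>m n) + commutator (B ^\<^sub>m m) (A ^\<^sub>m n) * B)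
      (K ^ m * (real n * K ^ n * \<delta>) + real m * real n * K ^ (m + n) * \<delta> * K)"
    by (rule op_norm_le_add[OF op_norm_le_mult[OF op_norm_le_pow[OF B] commutator_pow_right]
          op_norm_le_mult[OF Suc B]])
  moreover have "real n * K ^ (m + n) * \<delta> \<le> real n * K ^ (Suc m + n) * \<delta>"
    using K_ge_1 \<delta>_nonneg by (intro mult_right_mono mult_left_mono power_increasing) auto
  ultimately show ?case
    by (auto simp: algebra_simps power_add elim!: op_norm_le_mono)
qed

lemma word_mat_carrier: "word_mat A B d ps \<in> carrier_mat d d"
proof (induction ps)
  case (Cons p ps)
  have "word_mat A B d (p # ps) = A ^\<^sub>m fst p * B ^\<^sub>m snd p * word_mat A B d ps"
    by (simp add: word_mat_def split: prod.split)
  then show ?case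
    using Cons A_carrier B_carrier by (simp add: mult_carrier_mat[of _ d d])
qed (simp add: word_mat_def)

lemma word_mat_reorder:
  "op_norm_le d (word_mat A B d ps - A ^\<^sub>m sum_list (map fst ps) * B ^\<^sub>m sum_list (map snd ps))
     (reorder_bound K ps * \<delta>)"
proof (induction ps)
  case Nil
  show ?case using op_norm_le_diff_self[OF one_carrier_mat] by (simp add: word_mat_def)
next
  case (Cons p ps)
  obtain n m where p: "p = (n, m)" by force
  define n' m' W where "n' = sum_list (map fst ps)" and "m' = sum_list (map snd ps)"
    and "W = word_mat A B d ps"
  note carriers = pow_carrier_mat[OF A_carrier] pow_carrier_mat[OF B_carrier]
  have split: "word_mat A B d (p # ps)
        - A ^\<^sub>m sum_list (map fst (p # ps)) * B ^\<^sub>m sum_list (map snd (p # ps))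
      = (A ^\<^sub>m n * B ^\<^sub>m m) * (W - A ^\<^sub>m n' * B ^\<^sub>m m')
        + A ^\<^sub>m n * commutator (B ^\<^sub>m m) (A ^\<^sub>m n') * B ^\<^sub>m m'" (is "?L = ?R")
  proof -
    have "?L = A ^\<^sub>m n * B ^\<^sub>m m * W - (A ^\<^sub>m n * A ^\<^sub>m n') * (B ^\<^sub>m m * B ^\<^sub>m m')"
      unfolding p n'_def m'_def W_def
      by (simp add: word_mat_def pow_mat_add[OF A_carrier] pow_mat_add[OF B_carrier])
    also have "\<dots> = ?R"
      unfolding W_def by (rule reorder_step_identity[OF carriers carriers word_mat_carrier])
    finally show ?thesis .
  qed
  have "op_norm_le d ?R (K ^ n * K ^ m * (reorder_bound K ps * \<delta>)
      + K ^ n * (real m * real n' * K ^ (m + n') * \<delta>) * K ^ m')"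
    using Cons.IH unfolding n'_def m'_def W_def
    by (intro op_norm_le_add op_norm_le_mult op_norm_le_pow A B commutator_pows)
  moreover have "K ^ n * K ^ m * (reorder_bound K ps * \<delta>)
      + K ^ n * (real m * real n' * K ^ (m + n') * \<delta>) * K ^ m' = reorder_bound K (p # ps) * \<delta>"
    unfolding p n'_def m'_def by (simp add: algebra_simps power_add)
  ultimately show ?case unfolding split by simp
qed

end

subsection \<open>Sums of commuting families and ladder operators\<close>

definition mat_sum :: "nat \<Rightarrow> nat \<Rightarrow> (nat \<Rightarrow> complex mat) \<Rightarrow> complex mat" where
  "mat_sum d N F = mat d d (\<lambda>(i, j). \<Sum>k<N. F k $$ (i, j))"

lemma mat_sum_carrier [simp]: "mat_sum d N F \<in> carrier_mat d d"
  and dim_mat_sum [simp]: "dim_row (mat_sum d N F) = d" "dim_col (mat_sum d N F) = d"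
  unfolding mat_sum_def by simp_all

lemma index_mat_sum [simp]: "i < d \<Longrightarrow> j < d \<Longrightarrow> mat_sum d N F $$ (i, j) = (\<Sum>k<N. F k $$ (i, j))"
  unfolding mat_sum_def by simp

lemma op_norm_le_mat_sum:
  assumes "\<And>k. k < N \<Longrightarrow> op_norm_le d (F k) K"
  shows "op_norm_le d (mat_sum d N F) (real N * K)"
  using assms
proof (induction N)
  case 0
  have "mat_sum d 0 F = 0\<^sub>m d d" by (rule eq_matI) auto
  then show ?case using op_norm_le_zero by simp
next
  case (Suc N)
  have F: "op_norm_le d (F N) K" using Suc.prems by simp
  have "mat_sum d (Suc N) F = mat_sum d N F + F N"
    using op_norm_leD(1)[OF F] by (intro eq_matI) auto
  moreover have "op_norm_le d (mat_sum d N F + F N) (real N * K + K)"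
    using Suc by (intro op_norm_le_add F) auto
  ultimately show ?case by (simp add: algebra_simps)
qed

lemma index_mult_mat_sum:
  assumes F: "\<And>k. k < N \<Longrightarrow> F k \<in> carrier_mat d d" and G: "\<And>k. k < N \<Longrightarrow> G k \<in> carrier_mat d d"
    and i: "i < d" and j: "j < d"
  shows "(mat_sum d N F * mat_sum d N G) $$ (i, j) = (\<Sum>k<N. \<Sum>l<N. (F k * G l) $$ (i, j))"
proof -
  have "(mat_sum d N F * mat_sum d N G) $$ (i, j) = (\<Sum>t<d. \<Sum>k<N. \<Sum>l<N. F k $$ (i, t) * G l $$ (t, j))"
    using i j by (simp add: scalar_prod_def lessThan_atLeast0 sum_product)
  also have "\<dots> = (\<Sum>k<N. \<Sum>l<N. \<Sum>t<d. F k $$ (i, t) * G l $$ (t, j))"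
    by (simp add: sum.swap[of _ "{..<d}"])
  also have "\<dots> = (\<Sum>k<N. \<Sum>l<N. (F k * G l) $$ (i, j))"
  proof (intro sum.cong refl)
    fix k l assume "k \<in> {..<N}" "l \<in> {..<N}"
    with F[of k] G[of l] i j show "(\<Sum>t<d. F k $$ (i, t) * G l $$ (t, j)) = (F k * G l) $$ (i, j)"
      by (simp add: scalar_prod_def lessThan_atLeast0)
  qed
  finally show ?thesis .
qed

lemma commutator_mat_sum:
  assumes F: "\<And>k. k < N \<Longrightarrow> F k \<in> carrier_mat d d" and G: "\<And>k. k < N \<Longrightarrow> G k \<in> carrier_mat d d"
    and FG: "\<And>k l. k < N \<Longrightarrow> l < N \<Longrightarrow> k \<noteq> l \<Longrightarrow> F k * G l = G l * F k"
  shows "commutator (mat_sum d N F) (mat_sum d N G) = mat_sum d N (\<lambda>k. commutator (F k) (G k))"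
proof (rule eq_matI)
  fix i j assume "i < dim_row (mat_sum d N (\<lambda>k. commutator (F k) (G k)))"
    "j < dim_col (mat_sum d N (\<lambda>k. commutator (F k) (G k)))"
  then have i: "i < d" and j: "j < d" by simp_all
  have "commutator (mat_sum d N F) (mat_sum d N G) $$ (i, j)
      = (\<Sum>k<N. \<Sum>l<N. (F k * G l) $$ (i, j)) - (\<Sum>l<N. \<Sum>k<N. (G l * F k) $$ (i, j))"
    using index_mult_mat_sum[OF F G i j] index_mult_mat_sum[OF G F i j] i j by simp
  also have "\<dots> = (\<Sum>k<N. \<Sum>l<N. (F k * G l) $$ (i, j) - (G l * F k) $$ (i, j))"
    by (simp add: sum.swap[of "\<lambda>l k. (G l * F k) $$ (i, j)"] sum_subtractf)
  also have "\<dots> = (\<Sum>k<N. (F k * G k) $$ (i, j) - (G k * F k) $$ (i, j))"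
  proof (intro sum.cong refl)
    fix k assume "k \<in> {..<N}"
    then show "(\<Sum>l<N. (F k * G l) $$ (i, j) - (G l * F k) $$ (i, j))
        = (F k * G k) $$ (i, j) - (G k * F k) $$ (i, j)"
      by (simp add: sum.remove[of _ k] FG)
  qed
  also have "\<dots> = mat_sum d N (\<lambda>k. commutator (F k) (G k)) $$ (i, j)"
  proof -
    have "(F k * G k) $$ (i, j) - (G k * F k) $$ (i, j) = commutator (F k) (G k) $$ (i, j)" if "k < N" for k
      using F[OF that] G[OF that] i j by simp
    then show ?thesis using i j by simp
  qed
  finally show "commutator (mat_sum d N F) (mat_sum d N G) $$ (i, j)
      = mat_sum d N (\<lambda>k. commutator (F k) (G k)) $$ (i, j)" .
qed simp_all

text \<open>Only the diagonal terms survive, so the commutator of two sums of \<open>N\<close> bounded operators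
  is \<open>O(N)\<close> rather than \<open>O(N\<^sup>2)\<close>.\<close>

lemma op_norm_le_commutator_mat_sum:
  assumes F: "\<And>k. k < N \<Longrightarrow> op_norm_le d (F k) K" and G: "\<And>k. k < N \<Longrightarrow> op_norm_le d (G k) L"
    and FG: "\<And>k l. k < N \<Longrightarrow> l < N \<Longrightarrow> k \<noteq> l \<Longrightarrow> F k * G l = G l * F k"
  shows "op_norm_le d (commutator (mat_sum d N F) (mat_sum d N G)) (real N * (2 * K * L))"
proof -
  have "op_norm_le d (commutator (F k) (G k)) (K * L + L * K)" if "k < N" for k
    using that by (intro op_norm_le_diff op_norm_le_mult F G)
  moreover have "K * L + L * K = 2 * K * L" by simp
  ultimately show ?thesis
    using commutator_mat_sum[OF op_norm_leD(1)[OF F] op_norm_leD(1)[OF G] FG]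
    by (simp add: op_norm_le_mat_sum)
qed

lemma commutator_smult:
  assumes "A \<in> carrier_mat d d" "B \<in> carrier_mat d d"
  shows "commutator (a \<cdot>\<^sub>m A) (b \<cdot>\<^sub>m B) = (a * b) \<cdot>\<^sub>m commutator A B"
  by (rule eq_matI) (use assms in \<open>auto simp: algebra_simps scalar_prod_def sum_distrib_left sum_subtractf\<close>)

lemma commutator_ladder:
  assumes "X \<in> carrier_mat d d" "Y \<in> carrier_mat d d"
  shows "commutator (X + \<i> \<cdot>\<^sub>m Y) (X - \<i> \<cdot>\<^sub>m Y) = (- 2 * \<i>) \<cdot>\<^sub>m commutator X Y"
  by (rule eq_matI)
    (use assms in \<open>auto simp: algebra_simps scalar_prod_def sum_distrib_left
      sum_subtractf[symmetric] sum.distrib[symmetric]\<close>)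

lemma op_norm_le_ladder:
  assumes X: "op_norm_le d X a" and Y: "op_norm_le d Y a" and XY: "op_norm_le d (commutator X Y) b"
  shows "op_norm_le d (X + \<i> \<cdot>\<^sub>m Y) (2 * a)" "op_norm_le d (X - \<i> \<cdot>\<^sub>m Y) (2 * a)"
    and "op_norm_le d (commutator (X + \<i> \<cdot>\<^sub>m Y) (X - \<i> \<cdot>\<^sub>m Y)) (2 * b)"
proof -
  have "a + cmod \<i> * a = 2 * a" "cmod (- 2 * \<i>) * b = 2 * b"
    by (simp_all add: norm_mult)
  moreover have "commutator (X + \<i> \<cdot>\<^sub>m Y) (X - \<i> \<cdot>\<^sub>m Y) = (- 2 * \<i>) \<cdot>\<^sub>m commutator X Y"
    using op_norm_leD(1)[OF X] op_norm_leD(1)[OF Y] by (rule commutator_ladder)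
  ultimately show "op_norm_le d (X + \<i> \<cdot>\<^sub>m Y) (2 * a)" "op_norm_le d (X - \<i> \<cdot>\<^sub>m Y) (2 * a)"
    and "op_norm_le d (commutator (X + \<i> \<cdot>\<^sub>m Y) (X - \<i> \<cdot>\<^sub>m Y)) (2 * b)"
    using op_norm_le_add[OF X op_norm_le_smult[OF Y]] op_norm_le_diff[OF X op_norm_le_smult[OF Y]]
      op_norm_le_smult[OF XY] by metis+
qed

lemma op_norm_le_collective_ladder:
  assumes P: "\<And>k. k < N \<Longrightarrow> op_norm_le d (P k) 1" and Q: "\<And>k. k < N \<Longrightarrow> op_norm_le d (Q k) 1"
    and PQ: "\<And>k l. k < N \<Longrightarrow> l < N \<Longrightarrow> k \<noteq> l \<Longrightarrow> P k * Q l = Q l * P k"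
  defines "X \<equiv> (1/2 :: complex) \<cdot>\<^sub>m mat_sum d N P" and "Y \<equiv> (1/2 :: complex) \<cdot>\<^sub>m mat_sum d N Q"
  shows "op_norm_le d (X + \<i> \<cdot>\<^sub>m Y) (real N)" "op_norm_le d (X - \<i> \<cdot>\<^sub>m Y) (real N)"
    and "op_norm_le d (commutator (X + \<i> \<cdot>\<^sub>m Y) (X - \<i> \<cdot>\<^sub>m Y)) (real N)"
proof -
  have "op_norm_le d X (real N / 2)" "op_norm_le d Y (real N / 2)"
    using op_norm_le_smult[OF op_norm_le_mat_sum[OF P], where a = "1/2"]
      op_norm_le_smult[OF op_norm_le_mat_sum[OF Q], where a = "1/2"]
    unfolding X_def Y_def by simp_all
  moreover have "op_norm_le d (commutator X Y) (real N / 2)"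
    using op_norm_le_smult[OF op_norm_le_commutator_mat_sum[OF P Q PQ], where a = "1/4"]
    unfolding X_def Y_def by (simp add: commutator_smult[of _ d])
  ultimately show "op_norm_le d (X + \<i> \<cdot>\<^sub>m Y) (real N)" "op_norm_le d (X - \<i> \<cdot>\<^sub>m Y) (real N)"
    and "op_norm_le d (commutator (X + \<i> \<cdot>\<^sub>m Y) (X - \<i> \<cdot>\<^sub>m Y)) (real N)"
    using op_norm_le_ladder[of d X "real N / 2" Y "real N / 2"] by simp_all
qed

subsection \<open>Collective spin operators\<close>

lemma pauli_x_carrier: "pauli_x \<in> carrier_mat 2 2"
  and pauli_y_carrier: "pauli_y \<in> carrier_mat 2 2"
  unfolding pauli_x_def pauli_y_def by (auto simp: mat_of_rows_list_def numeral_2_eq_2)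

lemma pauli_x_unitary: "mat_adjoint pauli_x * pauli_x = 1\<^sub>m 2"
  by (rule eq_matI)
    (auto simp: pauli_x_def mat_adjoint_def mat_of_rows_list_def scalar_prod_def less_2_cases_iff)

lemma pauli_y_unitary: "mat_adjoint pauli_y * pauli_y = 1\<^sub>m 2"
  by (rule eq_matI)
    (auto simp: pauli_y_def mat_adjoint_def mat_of_rows_list_def scalar_prod_def less_2_cases_iff)

lemma site_op_dim:
  assumes "k < N"
  shows "(2::nat) ^ k * 2 * 2 ^ (N - k - 1) = 2 ^ N"
proof -
  have "(2::nat) ^ k * 2 * 2 ^ (N - k - 1) = 2 ^ (Suc k + (N - k - 1))"
    by (simp add: power_add)
  also have "\<dots> = 2 ^ N" using assms by simp
  finally show ?thesis .
qed

lemma site_op_carrier: "k < N \<Longrightarrow> A \<in> carrier_mat 2 2 \<Longrightarrow> site_op N k A \<in> carrier_mat (2^N) (2^N)"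
  unfolding site_op_def using site_op_dim[of k N] by (auto intro!: carrier_matI)

lemma site_op_unitary:
  assumes k: "k < N" and A: "A \<in> carrier_mat 2 2" and U: "mat_adjoint A * A = 1\<^sub>m 2"
  shows "mat_adjoint (site_op N k A) * site_op N k A = 1\<^sub>m (2^N)"
proof -
  have "mat_adjoint (site_op N k A) * site_op N k A = 1\<^sub>m (2^k * 2 * 2 ^ (N - k - 1))"
    unfolding site_op_def
    by (intro kron_unitary kron_carrier_mat one_carrier_mat A U) (simp_all add: mat_adjoint_one)
  then show ?thesis using site_op_dim[OF k] by simp
qed

lemma site_op_commute_less:
  assumes kl: "k < l" and lN: "l < N" and A: "A \<in> carrier_mat 2 2" and B: "B \<in> carrier_mat 2 2"
  shows "site_op N k A * site_op N l B = site_op N l B * site_op N k A"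
proof -
  define p a q where "p = (2::nat) ^ k" and "a = (2::nat) ^ (l - k - 1)" and "q = (2::nat) ^ (N - l - 1)"
  have "(2::nat) ^ (N - k - 1) = a * (2 * q)"
  proof -
    have "N - k - 1 = (l - k - 1) + 1 + (N - l - 1)" using kl lN by simp
    then have "(2::nat) ^ (N - k - 1) = 2 ^ (l - k - 1) * 2 ^ 1 * 2 ^ (N - l - 1)"
      by (simp only: power_add)
    then show ?thesis unfolding a_def q_def by (simp add: mult_ac)
  qed
  then have SA: "site_op N k A = kron (1\<^sub>m p) (kron A (kron (1\<^sub>m a) (kron (1\<^sub>m 2) (1\<^sub>m q))))"
    unfolding site_op_def p_def by (simp add: kron_assoc kron_one)
  have "(2::nat) ^ l = p * (2 * a)"
  proof -
    have "l = k + 1 + (l - k - 1)" using kl by simp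
    then have "(2::nat) ^ l = 2 ^ (k + 1 + (l - k - 1))" by simp
    then show ?thesis unfolding a_def p_def by (simp add: power_add)
  qed
  then have "(1\<^sub>m (2 ^ l) :: complex mat) = kron (1\<^sub>m p) (kron (1\<^sub>m 2) (1\<^sub>m a))"
    by (simp add: kron_one)
  then have SB: "site_op N l B = kron (1\<^sub>m p) (kron (1\<^sub>m 2) (kron (1\<^sub>m a) (kron B (1\<^sub>m q))))"
    unfolding site_op_def q_def by (simp add: kron_assoc)
  have dims: "dim_row A = 2" "dim_col A = 2" "dim_row B = 2" "dim_col B = 2"
    using A B by auto
  have "site_op N k A * site_op N l B = kron (1\<^sub>m p) (kron A (kron (1\<^sub>m a) (kron B (1\<^sub>m q))))"
    unfolding SA SB by (simp add: kron_mult dims)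
  moreover have "site_op N l B * site_op N k A = kron (1\<^sub>m p) (kron A (kron (1\<^sub>m a) (kron B (1\<^sub>m q))))"
    unfolding SA SB by (simp add: kron_mult dims)
  ultimately show ?thesis by simp
qed

lemma site_op_commute:
  assumes "k \<noteq> l" "k < N" "l < N" "A \<in> carrier_mat 2 2" "B \<in> carrier_mat 2 2"
  shows "site_op N k A * site_op N l B = site_op N l B * site_op N k A"
proof (cases "k < l")
  case True
  then show ?thesis using assms by (intro site_op_commute_less)
next
  case False
  then have "l < k" using assms by simp
  then show ?thesis using assms by (intro site_op_commute_less[symmetric])
qed

lemma op_norm_le_kron_site_op:
  assumes k: "k < N" and A: "A \<in> carrier_mat 2 2" and U: "mat_adjoint A * A = 1\<^sub>m 2"
  shows "op_norm_le (2^N * M) (kron (site_op N k A) (1\<^sub>m M)) 1"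
proof (rule op_norm_le_unitary)
  show "kron (site_op N k A) (1\<^sub>m M) \<in> carrier_mat (2^N * M) (2^N * M)"
    using site_op_carrier[OF k A] by (rule kron_carrier_mat) simp
  show "mat_adjoint (kron (site_op N k A) (1\<^sub>m M)) * kron (site_op N k A) (1\<^sub>m M) = 1\<^sub>m (2^N * M)"
    by (rule kron_unitary[OF site_op_carrier[OF k A] one_carrier_mat site_op_unitary[OF k A U]])
      (simp add: mat_adjoint_one)
qed

lemma kron_site_op_commute:
  assumes "k \<noteq> l" "k < N" "l < N" "A \<in> carrier_mat 2 2" "B \<in> carrier_mat 2 2"
  shows "kron (site_op N k A) (1\<^sub>m M) * kron (site_op N l B) (1\<^sub>m M)
       = kron (site_op N l B) (1\<^sub>m M) * kron (site_op N k A) (1\<^sub>m M)"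
  using assms site_op_carrier[of k N A] site_op_carrier[of l N B]
  by (simp add: kron_mult site_op_commute[OF assms])

lemma spin_op_carrier: "spin_op N A \<in> carrier_mat (2^N) (2^N)"
  unfolding spin_op_def by simp

lemma kron_spin_op:
  assumes A: "A \<in> carrier_mat 2 2"
  shows "kron (spin_op N A) (1\<^sub>m M) = (1/2) \<cdot>\<^sub>m mat_sum (2^N * M) N (\<lambda>k. kron (site_op N k A) (1\<^sub>m M))"
proof (rule eq_matI)
  fix i j assume "i < dim_row ((1/2) \<cdot>\<^sub>m mat_sum (2^N * M) N (\<lambda>k. kron (site_op N k A) (1\<^sub>m M)))"
    "j < dim_col ((1/2) \<cdot>\<^sub>m mat_sum (2^N * M) N (\<lambda>k. kron (site_op N k A) (1\<^sub>m M)))"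
  then have i: "i < 2^N * M" and j: "j < 2^N * M" by simp_all
  have "kron (site_op N k A) (1\<^sub>m M) $$ (i, j)
      = site_op N k A $$ (i div M, j div M) * 1\<^sub>m M $$ (i mod M, j mod M)" if "k < N" for k
    using site_op_carrier[OF that A] i j by simp
  then show "kron (spin_op N A) (1\<^sub>m M) $$ (i, j)
      = ((1/2) \<cdot>\<^sub>m mat_sum (2^N * M) N (\<lambda>k. kron (site_op N k A) (1\<^sub>m M))) $$ (i, j)"
    using i j div_mod_less_mult[OF i] div_mod_less_mult[OF j]
    by (simp add: spin_op_def sum_distrib_right)
qed (simp_all add: spin_op_def)

lemma Eplus_Eminus_kron:
  fixes c :: real and N :: nat
  defines "X \<equiv> kron (Sx N) (1\<^sub>m (2^N))" and "Y \<equiv> kron (Sy N) (1\<^sub>m (2^N))"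
    and "s \<equiv> complex_of_real (1 / (c * real N))"
  shows "Eplus c N = s \<cdot>\<^sub>m (X + \<i> \<cdot>\<^sub>m Y)" "Eminus c N = s \<cdot>\<^sub>m (X - \<i> \<cdot>\<^sub>m Y)"
proof -
  have "Sx N \<in> carrier_mat (2^N) (2^N)" "Sy N \<in> carrier_mat (2^N) (2^N)"
    unfolding Sx_def Sy_def by (simp_all add: spin_op_carrier)
  then show "Eplus c N = s \<cdot>\<^sub>m (X + \<i> \<cdot>\<^sub>m Y)" "Eminus c N = s \<cdot>\<^sub>m (X - \<i> \<cdot>\<^sub>m Y)"
    unfolding Eplus_def Eminus_def Splus_def Sminus_def X_def Y_def s_def
    by (simp_all add: kron_add_left kron_diff_left kron_smult_left)
qed

lemma ladder_op_bounds:
  assumes c: "c > 0" and N: "N \<ge> 1"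
  shows "op_norm_le (4^N) (Eplus c N) (1/c)" "op_norm_le (4^N) (Eminus c N) (1/c)"
    and "op_norm_le (4^N) (commutator (Eplus c N) (Eminus c N)) (1 / (c^2 * real N))"
proof -
  define P Q where "P k = kron (site_op N k pauli_x) (1\<^sub>m (2^N))"
    and "Q k = kron (site_op N k pauli_y) (1\<^sub>m (2^N))" for k
  define X Y where "X = kron (Sx N) (1\<^sub>m (2^N))" and "Y = kron (Sy N) (1\<^sub>m (2^N))"
  define s where "s = complex_of_real (1 / (c * real N))"
  have D: "2^N * 2^N = (4::nat) ^ N" by (simp flip: power_mult_distrib)
  have P: "op_norm_le (4^N) (P k) 1" and Q: "op_norm_le (4^N) (Q k) 1" if "k < N" for k
    unfolding P_def Q_def D[symmetric] using that
    by (simp_all add: op_norm_le_kron_site_op pauli_x_carrier pauli_y_carrier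
        pauli_x_unitary pauli_y_unitary)
  have PQ: "P k * Q l = Q l * P k" if "k < N" "l < N" "k \<noteq> l" for k l
    unfolding P_def Q_def using that
    by (intro kron_site_op_commute) (auto simp: pauli_x_carrier pauli_y_carrier)
  have XY: "X = (1/2 :: complex) \<cdot>\<^sub>m mat_sum (4^N) N P" "Y = (1/2 :: complex) \<cdot>\<^sub>m mat_sum (4^N) N Q"
    unfolding X_def Y_def P_def Q_def Sx_def Sy_def D[symmetric]
    by (simp_all add: kron_spin_op pauli_x_carrier pauli_y_carrier)
  note ladder = op_norm_le_collective_ladder[where N = N and P = P and Q = Q, OF P Q PQ, folded XY]
  have Eplus: "Eplus c N = s \<cdot>\<^sub>m (X + \<i> \<cdot>\<^sub>m Y)" and Eminus: "Eminus c N = s \<cdot>\<^sub>m (X - \<i> \<cdot>\<^sub>m Y)"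
    unfolding X_def Y_def s_def by (rule Eplus_Eminus_kron)+
  have "X \<in> carrier_mat (4^N) (4^N)" "Y \<in> carrier_mat (4^N) (4^N)"
    unfolding XY by simp_all
  then have comm: "commutator (Eplus c N) (Eminus c N)
      = (s * s) \<cdot>\<^sub>m commutator (X + \<i> \<cdot>\<^sub>m Y) (X - \<i> \<cdot>\<^sub>m Y)"
    unfolding Eplus Eminus by (intro commutator_smult[of _ "4^N"]) auto
  have "cmod s = 1 / (c * real N)"
    unfolding s_def norm_of_real using c by simp
  then have scale: "cmod s * real N = 1 / c" "cmod (s * s) * real N = 1 / (c^2 * real N)"
    using N by (simp_all add: norm_mult power2_eq_square)
  show "op_norm_le (4^N) (Eplus c N) (1/c)" "op_norm_le (4^N) (Eminus c N) (1/c)"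
    using op_norm_le_smult[OF ladder(1), where a = s] op_norm_le_smult[OF ladder(2), where a = s] scale
    unfolding Eplus Eminus by simp_all
  show "op_norm_le (4^N) (commutator (Eplus c N) (Eminus c N)) (1 / (c^2 * real N))"
    using op_norm_le_smult[OF ladder(3), where a = "s * s"] scale unfolding comm by simp
qed

lemma almost_commuting_ladder_ops:
  assumes "c > 0" "N \<ge> 1"
  shows "almost_commuting (4^N) (Eminus c N) (Eplus c N) (max 1 (1/c)) (1 / (c^2 * real N))"
  using ladder_op_bounds[OF assms] by unfold_locales (auto intro: op_norm_le_mono)

subsection \<open>The purified Gibbs state\<close>

lemma gibbs_weight_nonneg: "0 \<le> gibbs_weight \<beta> N lam a"
  unfolding gibbs_weight_def by (intro divide_nonneg_nonneg sum_nonneg) auto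

lemma gibbs_weight_sum: "(\<Sum>a<2^N. gibbs_weight \<beta> N lam a) = 1"
proof -
  have "0 < (\<Sum>b<(2::nat)^N. exp (- \<beta> * lam b))"
    by (rule sum_pos) (simp_all add: lessThan_empty_iff)
  then show ?thesis unfolding gibbs_weight_def by (simp flip: sum_divide_distrib)
qed

lemma dim_vkron [simp]: "dim_vec (vkron v w) = dim_vec v * dim_vec w"
  unfolding vkron_def by simp

lemma vkron_cinner:
  assumes "v \<in> carrier_vec n" "v' \<in> carrier_vec n" "u \<in> carrier_vec m" "u' \<in> carrier_vec m"
  shows "vkron v u \<bullet>c vkron v' u' = (v \<bullet>c v') * (u \<bullet>c u')"
proof -
  have "vkron v u \<bullet>c vkron v' u'
      = (\<Sum>t<n * m. v $ (t div m) * u $ (t mod m) * cnj (v' $ (t div m) * u' $ (t mod m)))"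
    using assms by (simp add: scalar_prod_def lessThan_atLeast0 vkron_def)
  also have "\<dots> = (\<Sum>a<n. \<Sum>b<m. (v $ a * cnj (v' $ a)) * (u $ b * cnj (u' $ b)))"
    unfolding sum_lessThan_mult by (intro sum.cong refl) (simp add: mult_ac)
  also have "\<dots> = (v \<bullet>c v') * (u \<bullet>c u')"
    using assms by (simp add: scalar_prod_def lessThan_atLeast0 sum_product)
  finally show ?thesis .
qed

lemma cinner_self_orthonormal_combination:
  fixes n :: nat
  assumes U: "\<And>a. a < n \<Longrightarrow> U a \<in> carrier_vec D"
    and orth: "\<And>a b. a < n \<Longrightarrow> b < n \<Longrightarrow> U a \<bullet>c U b = (if a = b then 1 else 0)"
    and v: "v \<in> carrier_vec D" "\<And>i. i < D \<Longrightarrow> v $ i = (\<Sum>a<n. w a * U a $ i)"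
  shows "v \<bullet>c v = (\<Sum>a<n. w a * cnj (w a))"
proof -
  have "v \<bullet>c v = (\<Sum>i<D. \<Sum>a<n. \<Sum>b<n. w a * cnj (w b) * (U a $ i * cnj (U b $ i)))"
    using v by (simp add: scalar_prod_def lessThan_atLeast0 sum_product mult_ac)
  also have "\<dots> = (\<Sum>a<n. \<Sum>b<n. w a * cnj (w b) * (U a \<bullet>c U b))"
  proof -
    have "U a \<bullet>c U b = (\<Sum>i<D. U a $ i * cnj (U b $ i))" if "b < n" for a b
      using U[OF that] by (simp add: scalar_prod_def lessThan_atLeast0)
    then show ?thesis by (simp add: sum.swap[of _ "{..<D}"] sum_distrib_left)
  qed
  also have "\<dots> = (\<Sum>a<n. w a * cnj (w a))"
  proof (intro sum.cong refl)
    fix a assume a: "a \<in> {..<n}"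
    have "w a * cnj (w b) * (U a \<bullet>c U b) = (if a = b then w a * cnj (w a) else 0)" if "b < n" for b
      using orth[of a b] a that by simp
    then show "(\<Sum>b<n. w a * cnj (w b) * (U a \<bullet>c U b)) = w a * cnj (w a)"
      using a by simp
  qed
  finally show ?thesis .
qed

lemma purif_carrier: "purif \<beta> N lam e \<in> carrier_vec (4^N)"
  unfolding purif_def by simp

lemma purif_vnorm:
  assumes e: "\<And>a. a < 2^N \<Longrightarrow> e a \<in> carrier_vec (2^N)"
    and orth: "\<And>a b. a < 2^N \<Longrightarrow> b < 2^N \<Longrightarrow> e a \<bullet>c e b = (if a = b then 1 else 0)"
  shows "vnorm (purif \<beta> N lam e) = 1"
proof -
  have D: "(4::nat) ^ N = 2^N * 2^N" by (simp flip: power_mult_distrib)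
  have U: "vkron (e a) (e a) \<in> carrier_vec (4^N)" if "a < 2^N" for a
    using e[OF that] by (auto simp: D intro!: carrier_vecI)
  have orthU: "vkron (e a) (e a) \<bullet>c vkron (e b) (e b) = (if a = b then 1 else 0)"
    if "a < 2^N" "b < 2^N" for a b
    using orth[OF that]
    by (simp add: vkron_cinner[OF e[OF that(1)] e[OF that(2)] e[OF that(1)] e[OF that(2)]])
  have "purif \<beta> N lam e \<bullet>c purif \<beta> N lam e
      = (\<Sum>a<2^N. complex_of_real (sqrt (gibbs_weight \<beta> N lam a))
                  * cnj (complex_of_real (sqrt (gibbs_weight \<beta> N lam a))))"
    by (rule cinner_self_orthonormal_combination[where U = "\<lambda>a. vkron (e a) (e a)", OF U orthU])
      (simp_all add: purif_def)
  also have "\<dots> = 1"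
    by (simp add: gibbs_weight_nonneg gibbs_weight_sum flip: of_real_mult of_real_sum)
  finally have "complex_of_real (vnorm (purif \<beta> N lam e) ^ 2) = 1"
    by (simp only: cinner_self_vnorm)
  then have "vnorm (purif \<beta> N lam e) ^ 2 = 1"
    by (simp only: of_real_eq_1_iff)
  then show ?thesis using vnorm_nonneg[of "purif \<beta> N lam e"] by (auto simp: power2_eq_1_iff)
qed

lemma expect_diff:
  assumes "\<Omega> \<in> carrier_vec d" "A \<in> carrier_mat d d" "B \<in> carrier_mat d d"
  shows "expect \<Omega> (A - B) = expect \<Omega> A - expect \<Omega> B"
  using assms by (simp add: expect_def minus_mult_distrib_mat_vec minus_scalar_prod_distrib[of _ d])

lemma cmod_expect_mult_le:
  assumes \<Omega>: "\<Omega> \<in> carrier_vec d" "vnorm \<Omega> = 1" and M: "op_norm_le d M K"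
    and X: "X \<in> carrier_mat d d"
  shows "cmod (expect \<Omega> (M * X)) \<le> K * vnorm (X *\<^sub>v \<Omega>)"
proof -
  have "expect \<Omega> (M * X) = (M *\<^sub>v (X *\<^sub>v \<Omega>)) \<bullet>c \<Omega>"
    unfolding expect_def using op_norm_leD(1)[OF M] X \<Omega> by (simp add: assoc_mult_mat_vec)
  also have "cmod \<dots> \<le> vnorm (M *\<^sub>v (X *\<^sub>v \<Omega>)) * vnorm \<Omega>"
    using op_norm_leD(1)[OF M] X \<Omega> by (intro cmod_cinner_le) simp
  also have "\<dots> \<le> K * vnorm (X *\<^sub>v \<Omega>)"
    using op_norm_leD(3)[OF M] X \<Omega> by simp
  finally show ?thesis .
qed

lemma cmod_expect_le:
  assumes "\<Omega> \<in> carrier_vec d" "vnorm \<Omega> = 1" "op_norm_le d M K"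
  shows "cmod (expect \<Omega> M) \<le> K"
  using cmod_expect_mult_le[OF assms one_carrier_mat] assms op_norm_leD(1)[OF assms(3)] by simp

lemma expect_adjoint_mult_self:
  fixes X :: "complex mat"
  assumes \<Omega>: "\<Omega> \<in> carrier_vec d" and X: "X \<in> carrier_mat d d"
  shows "expect \<Omega> (mat_adjoint X * X) = complex_of_real (vnorm (X *\<^sub>v \<Omega>) ^ 2)"
proof -
  have "(mat_adjoint X * X) *\<^sub>v \<Omega> = mat_adjoint X *\<^sub>v (X *\<^sub>v \<Omega>)"
    using X \<Omega> by (subst assoc_mult_mat_vec[of _ d d _ d]) (auto intro!: carrier_matI)
  then show ?thesis
    unfolding expect_def using X \<Omega> by (simp add: mat_adjoint_cinner cinner_self_vnorm)
qed

lemma tendsto_null_comparison: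
  assumes "\<forall>\<^sub>F x in F. norm (f x) \<le> g x" "(g \<longlongrightarrow> 0) F"
  shows "(f \<longlongrightarrow> 0) F"
proof -
  have "((\<lambda>x. norm (f x)) \<longlongrightarrow> 0) F"
    by (rule tendsto_sandwich[OF _ assms(1) tendsto_const assms(2)]) simp
  then show ?thesis by (simp only: tendsto_norm_zero_iff)
qed

lemma tendsto_expect_word_reorder:
  assumes unit: "\<forall>\<^sub>F N in sequentially. \<Omega> N \<in> carrier_vec (d N) \<and> vnorm (\<Omega> N) = 1"
    and ac: "\<forall>\<^sub>F N in sequentially. almost_commuting (d N) (A N) (B N) K (\<delta> N)"
    and \<delta>: "\<delta> \<longlonglongrightarrow> 0"
  shows "(\<lambda>N. expect (\<Omega> N) (word_mat (A N) (B N) (d N) ps)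
      - expect (\<Omega> N) (A N ^\<^sub>m sum_list (map fst ps) * B N ^\<^sub>m sum_list (map snd ps))) \<longlonglongrightarrow> 0"
proof (rule tendsto_null_comparison)
  show "\<forall>\<^sub>F N in sequentially. norm (expect (\<Omega> N) (word_mat (A N) (B N) (d N) ps)
      - expect (\<Omega> N) (A N ^\<^sub>m sum_list (map fst ps) * B N ^\<^sub>m sum_list (map snd ps)))
      \<le> reorder_bound K ps * \<delta> N"
    using unit ac
  proof eventually_elim
    case (elim N)
    then interpret almost_commuting "d N" "A N" "B N" K "\<delta> N" by simp
    have "A N ^\<^sub>m sum_list (map fst ps) * B N ^\<^sub>m sum_list (map snd ps) \<in> carrier_mat (d N) (d N)"
      by (rule mult_carrier_mat[OF pow_carrier_mat[OF A_carrier] pow_carrier_mat[OF B_carrier]])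
    then show ?case
      using cmod_expect_le[OF _ _ word_mat_reorder, of "\<Omega> N" ps] expect_diff[OF _ word_mat_carrier] elim
      by simp
  qed
  show "(\<lambda>N. reorder_bound K ps * \<delta> N) \<longlonglongrightarrow> 0"
    using tendsto_mult[OF tendsto_const[of "reorder_bound K ps"] \<delta>] by simp
qed

lemma tendsto_expect_mult_null:
  assumes unit: "\<forall>\<^sub>F N in sequentially. \<Omega> N \<in> carrier_vec (d N) \<and> vnorm (\<Omega> N) = 1"
    and M: "\<forall>\<^sub>F N in sequentially. op_norm_le (d N) (M N) K"
    and X: "\<forall>\<^sub>F N in sequentially. X N \<in> carrier_mat (d N) (d N)"
    and null: "(\<lambda>N. expect (\<Omega> N) (mat_adjoint (X N) * X N)) \<longlonglongrightarrow> 0"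
  shows "(\<lambda>N. expect (\<Omega> N) (M N * X N)) \<longlonglongrightarrow> 0"
proof (rule tendsto_null_comparison)
  show "\<forall>\<^sub>F N in sequentially. norm (expect (\<Omega> N) (M N * X N)) \<le> K * vnorm (X N *\<^sub>v \<Omega> N)"
    using unit M X by eventually_elim (blast intro: cmod_expect_mult_le)
  have "\<forall>\<^sub>F N in sequentially.
      expect (\<Omega> N) (mat_adjoint (X N) * X N) = complex_of_real (vnorm (X N *\<^sub>v \<Omega> N) ^ 2)"
    using unit X by eventually_elim (blast intro: expect_adjoint_mult_self)
  then have "(\<lambda>N. complex_of_real (vnorm (X N *\<^sub>v \<Omega> N) ^ 2)) \<longlonglongrightarrow> of_real 0"
    using null tendsto_cong by force
  then have "(\<lambda>N. sqrt (vnorm (X N *\<^sub>v \<Omega> N) ^ 2)) \<longlonglongrightarrow> sqrt 0"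
    unfolding tendsto_of_real_iff by (rule tendsto_real_sqrt)
  then have "(\<lambda>N. vnorm (X N *\<^sub>v \<Omega> N)) \<longlonglongrightarrow> 0"
    by simp
  then show "(\<lambda>N. K * vnorm (X N *\<^sub>v \<Omega> N)) \<longlonglongrightarrow> 0"
    using tendsto_mult[OF tendsto_const[of K]] by fastforce
qed

theorem corollary1:
  fixes eps Tc \<beta> c :: real
    and e :: "nat \<Rightarrow> nat \<Rightarrow> complex vec"
    and lam :: "nat \<Rightarrow> nat \<Rightarrow> real"
  assumes Tc_pos: "Tc > 0" and beta_pos: "\<beta> > 0"
    and e_dim: "\<And>N a. N \<ge> 1 \<Longrightarrow> a < 2^N \<Longrightarrow> e N a \<in> carrier_vec (2^N)"
    and e_orthonormal: "\<And>N a b. N \<ge> 1 \<Longrightarrow> a < 2^N \<Longrightarrow> b < 2^N \<Longrightarrow>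
          e N a \<bullet>c e N b = (if a = b then 1 else 0)"
    and e_eig_H: "\<And>N a. N \<ge> 1 \<Longrightarrow> a < 2^N \<Longrightarrow>
          ham eps Tc N *\<^sub>v e N a = complex_of_real (lam N a) \<cdot>\<^sub>v e N a"
    and e_eig_Ssq: "\<And>N a. N \<ge> 1 \<Longrightarrow> a < 2^N \<Longrightarrow>
          \<exists>\<mu>. Ssq N *\<^sub>v e N a = \<mu> \<cdot>\<^sub>v e N a"
    and e_eig_Sz: "\<And>N a. N \<ge> 1 \<Longrightarrow> a < 2^N \<Longrightarrow>
          \<exists>\<mu>. Sz N *\<^sub>v e N a = \<mu> \<cdot>\<^sub>v e N a"
    and c_lim: "(\<lambda>N. sqrt (Re (mtrace (gibbs_state \<beta> N (lam N) (e N) * Splus N * Sminus N))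
                        / (real N)^2)) \<longlonglongrightarrow> c"
    and c_pos: "c > 0"
  shows
    "(\<forall>ps :: (nat \<times> nat) list.
        (\<lambda>N. expect (purif \<beta> N (lam N) (e N)) (word_op c N ps)
            - expect (purif \<beta> N (lam N) (e N))
                ((Eminus c N ^\<^sub>m sum_list (map fst ps)) * (Eplus c N ^\<^sub>m sum_list (map snd ps))))
        \<longlonglongrightarrow> 0)
     \<and>
     (\<forall>X :: nat \<Rightarrow> complex mat.
        (\<forall>N. X N \<in> carrier_mat (4^N) (4^N)) \<longrightarrow>
        (\<lambda>N. expect (purif \<beta> N (lam N) (e N)) (mat_adjoint (X N) * X N)) \<longlonglongrightarrow> 0 \<longrightarrow>
        (\<forall>n m :: nat.
           (\<lambda>N. expect (purif \<beta> N (lam N) (e N))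
                  ((Eminus c N ^\<^sub>m n) * (Eplus c N ^\<^sub>m m) * X N)) \<longlonglongrightarrow> 0))"
proof -
  define K where "K = max 1 (1/c)"
  have unit: "\<forall>\<^sub>F N in sequentially.
      purif \<beta> N (lam N) (e N) \<in> carrier_vec (4^N) \<and> vnorm (purif \<beta> N (lam N) (e N)) = 1"
    using eventually_ge_at_top[of 1]
    by eventually_elim (simp add: purif_carrier purif_vnorm e_dim e_orthonormal)
  have ac: "\<forall>\<^sub>F N in sequentially.
      almost_commuting (4^N) (Eminus c N) (Eplus c N) K (1 / (c^2 * real N))"
    using eventually_ge_at_top[of 1]
    by eventually_elim (simp add: K_def almost_commuting_ladder_ops c_pos)
  have "(\<lambda>N. 1 / (c^2 * real N)) \<longlonglongrightarrow> 0"
    using tendsto_mult[OF tendsto_const[of "1 / c^2"] lim_1_over_n] by simp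
  note part1 = tendsto_expect_word_reorder[OF unit ac this]
  have part2: "(\<lambda>N. expect (purif \<beta> N (lam N) (e N)) ((Eminus c N ^\<^sub>m n) * (Eplus c N ^\<^sub>m m) * X N))
      \<longlonglongrightarrow> 0"
    if X: "\<forall>N. X N \<in> carrier_mat (4^N) (4^N)"
      and null: "(\<lambda>N. expect (purif \<beta> N (lam N) (e N)) (mat_adjoint (X N) * X N)) \<longlonglongrightarrow> 0"
    for X n m
  proof (rule tendsto_expect_mult_null[OF unit _ _ null])
    show "\<forall>\<^sub>F N in sequentially. op_norm_le (4^N) (Eminus c N ^\<^sub>m n * Eplus c N ^\<^sub>m m) (K ^ n * K ^ m)"
      using ac by eventually_elim (simp add: almost_commuting_def op_norm_le_mult op_norm_le_pow)
  qed (simp add: X)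
  show ?thesis
    unfolding word_op_eq using part1 part2 by blast
qed

end
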